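(* Let $R$ be a commutative associative unital ring and $B$ a unital $R$-algebra with identity $1$. Assume $B=Rb_0\oplus\mathrm{ac}(B)$ for some $b_0\in B$ such that $Rb_0$ is free with basis $\{b_0\}$. Define $\pi\colon B\to R$ by $b=\pi(b)b_0+b_{\mathrm{ac}}$ with $b_{\mathrm{ac}}\in\mathrm{ac}(B)$, and $\beta_0\colon B\times B\to R$, $\beta_0(a,b)=\pi(ab)$. Then $\beta_0\in\mathrm{IBF}_R(B)$, $(B,\beta_0)$ satisfies the IBF-principle, and $\tilde\beta_0\colon\mathrm{AC}(B)\to R$, $\bar b\mapsto\beta_0(b,1)$, is a well-defined $R$-module isomorphism.
   Context: $\mathrm{ac}(B)=(B,B,B)+[B,B]$, where $(B,B,B)$ is the additive span of all associators $(ab)c-a(bc)$ and $[B,B]$ the additive span of all commutators $ab-ba$; $\mathrm{AC}(B)=B/\mathrm{ac}(B)$. $\mathrm{IBF}_R(B)$ is the $R$-module of $R$-bilinear forms $\beta\colon B\times B\to R$ with $\beta(ab,c)=\beta(a,bc)=\beta(b,ca)$. $\mathbf{IBF}_R(B)$ is the quotient of $B\otimes_R B$ by the $R$-span of all $ab\otimes c-a\otimes bc$ and $ab\otimes c-b\otimes ca$. $(B,\beta)$ satisfies the IBF-principle if $\beta\in\mathrm{IBF}_R(B)$ and the induced map $\mathbf{IBF}_R(B)\to R$, $\overline{a\otimes b}\mapsto\beta(a,b)$, is an $R$-module isomorphism. *)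

theory Defs
  imports Main "HOL.Modules"
begin

definition unital_algebra ::
  "('r::comm_ring_1 \<Rightarrow> 'b::ab_group_add \<Rightarrow> 'b) \<Rightarrow> ('b \<Rightarrow> 'b \<Rightarrow> 'b) \<Rightarrow> 'b \<Rightarrow> bool" where
  "unital_algebra scale m e \<longleftrightarrow>
     module scale \<and>
     (\<forall>a b c. m (a + b) c = m a c + m b c) \<and>
     (\<forall>a b c. m a (b + c) = m a b + m a c) \<and>
     (\<forall>r a b. m (scale r a) b = scale r (m a b)) \<and>
     (\<forall>r a b. m a (scale r b) = scale r (m a b)) \<and>
     (\<forall>a. m e a = a \<and> m a e = a)"

inductive_set acspan :: "('b::ab_group_add \<Rightarrow> 'b \<Rightarrow> 'b) \<Rightarrow> 'b set" for m where
  assoc: "m (m a b) c - m a (m b c) \<in> acspan m"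
| comm: "m a b - m b a \<in> acspan m"
| zero: "0 \<in> acspan m"
| add: "x \<in> acspan m \<Longrightarrow> y \<in> acspan m \<Longrightarrow> x + y \<in> acspan m"
| neg: "x \<in> acspan m \<Longrightarrow> - x \<in> acspan m"

definition bilinear_form ::
  "('r::comm_ring_1 \<Rightarrow> 'b::ab_group_add \<Rightarrow> 'b) \<Rightarrow> ('b \<Rightarrow> 'b \<Rightarrow> 'r) \<Rightarrow> bool" where
  "bilinear_form scale \<beta> \<longleftrightarrow>
     (\<forall>a a' b. \<beta> (a + a') b = \<beta> a b + \<beta> a' b) \<and>
     (\<forall>a b b'. \<beta> a (b + b') = \<beta> a b + \<beta> a b') \<and>
     (\<forall>r a b. \<beta> (scale r a) b = r * \<beta> a b) \<and>
     (\<forall>r a b. \<beta> a (scale r b) = r * \<beta> a b)"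

definition ibf ::
  "('r::comm_ring_1 \<Rightarrow> 'b::ab_group_add \<Rightarrow> 'b) \<Rightarrow> ('b \<Rightarrow> 'b \<Rightarrow> 'b) \<Rightarrow> ('b \<Rightarrow> 'b \<Rightarrow> 'r) \<Rightarrow> bool" where
  "ibf scale m \<beta> \<longleftrightarrow> bilinear_form scale \<beta> \<and>
     (\<forall>a b c. \<beta> (m a b) c = \<beta> a (m b c) \<and> \<beta> (m a b) c = \<beta> b (m c a))"

text \<open>The free R-module on B x B is modelled by finitely supported functions
  B x B => R; delta p is the basis vector of p.\<close>
definition delta :: "'b \<times> 'b \<Rightarrow> 'b \<times> 'b \<Rightarrow> 'r::comm_ring_1" where
  "delta p = (\<lambda>q. if q = p then 1 else 0)"

definition finsupp :: "('b \<times> 'b \<Rightarrow> 'r::comm_ring_1) \<Rightarrow> bool" where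
  "finsupp x \<longleftrightarrow> finite {p. x p \<noteq> 0}"

text \<open>The R-submodule of the free module generated by the relations defining
  B tensor_R B (bilinearity) together with ab x c - a x bc and ab x c - b x ca.
  The quotient of the free module by it is the module IBF_R(B) (bold).\<close>
inductive_set ibf_rel ::
  "('r::comm_ring_1 \<Rightarrow> 'b::ab_group_add \<Rightarrow> 'b) \<Rightarrow> ('b \<Rightarrow> 'b \<Rightarrow> 'b) \<Rightarrow> ('b \<times> 'b \<Rightarrow> 'r) set"
  for scale m where
  addl: "(\<lambda>q. delta (a + a', b) q - delta (a, b) q - delta (a', b) q) \<in> ibf_rel scale m"
| addr: "(\<lambda>q. delta (a, b + b') q - delta (a, b) q - delta (a, b') q) \<in> ibf_rel scale m"
| scl: "(\<lambda>q. delta (scale r a, b) q - r * delta (a, b) q) \<in> ibf_rel scale m"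
| scr: "(\<lambda>q. delta (a, scale r b) q - r * delta (a, b) q) \<in> ibf_rel scale m"
| inv1: "(\<lambda>q. delta (m a b, c) q - delta (a, m b c) q) \<in> ibf_rel scale m"
| inv2: "(\<lambda>q. delta (m a b, c) q - delta (b, m c a) q) \<in> ibf_rel scale m"
| zero: "(\<lambda>q. 0) \<in> ibf_rel scale m"
| add: "x \<in> ibf_rel scale m \<Longrightarrow> y \<in> ibf_rel scale m \<Longrightarrow> (\<lambda>q. x q + y q) \<in> ibf_rel scale m"
| smult: "x \<in> ibf_rel scale m \<Longrightarrow> (\<lambda>q. r * x q) \<in> ibf_rel scale m"

definition lin_ext :: "('b \<Rightarrow> 'b \<Rightarrow> 'r::comm_ring_1) \<Rightarrow> ('b \<times> 'b \<Rightarrow> 'r) \<Rightarrow> 'r" where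
  "lin_ext \<beta> x = (\<Sum>p\<in>{p. x p \<noteq> 0}. x p * \<beta> (fst p) (snd p))"

text \<open>IBF-principle: beta in IBF_R(B) (so the induced map on the quotient is well defined)
  and the induced map IBF_R(B) -> R is bijective: surjective, and its kernel is
  exactly the relation submodule.\<close>
definition ibf_principle ::
  "('r::comm_ring_1 \<Rightarrow> 'b::ab_group_add \<Rightarrow> 'b) \<Rightarrow> ('b \<Rightarrow> 'b \<Rightarrow> 'b) \<Rightarrow> ('b \<Rightarrow> 'b \<Rightarrow> 'r) \<Rightarrow> bool" where
  "ibf_principle scale m \<beta> \<longleftrightarrow> ibf scale m \<beta> \<and>
     (\<forall>r. \<exists>x. finsupp x \<and> lin_ext \<beta> x = r) \<and>
     (\<forall>x. finsupp x \<longrightarrow> lin_ext \<beta> x = 0 \<longrightarrow> x \<in> ibf_rel scale m)"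

definition ac_coeff ::
  "('r::comm_ring_1 \<Rightarrow> 'b::ab_group_add \<Rightarrow> 'b) \<Rightarrow> ('b \<Rightarrow> 'b \<Rightarrow> 'b) \<Rightarrow> 'b \<Rightarrow> 'b \<Rightarrow> 'r" where
  "ac_coeff scale m b0 b = (THE r. \<exists>c\<in>acspan m. b = scale r b0 + c)"

end

theory Submission
  imports Defs
begin

text \<open>Modulo the relations, a \<otimes> b \<equiv> ab \<otimes> 1 \<equiv> b \<otimes> a, so associators and
  commutators c satisfy c \<otimes> 1 \<equiv> 0, and c \<mapsto> c \<otimes> 1 is linear. Writing
  ab = \<pi>(ab) b0 + c with c \<in> ac(B) gives a \<otimes> b \<equiv> \<pi>(ab) (b0 \<otimes> 1): the module
  IBF_R(B) is generated by b0 \<otimes> 1. The induced map of \<beta>0 sends this generator to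
  \<pi>(b0) = 1, so every element of the free module on which \<beta>0 vanishes is a
  relation. Invariance of \<beta>0 holds because \<pi> vanishes on ac(B).\<close>

definition ibf_equiv ::
  "('r::comm_ring_1 \<Rightarrow> 'b::ab_group_add \<Rightarrow> 'b) \<Rightarrow> ('b \<Rightarrow> 'b \<Rightarrow> 'b)
     \<Rightarrow> ('b \<times> 'b \<Rightarrow> 'r) \<Rightarrow> ('b \<times> 'b \<Rightarrow> 'r) \<Rightarrow> bool" where
  "ibf_equiv scale m x y \<longleftrightarrow> (\<lambda>q. x q - y q) \<in> ibf_rel scale m"

lemma ibf_equiv_zero_iff: "ibf_equiv scale m x (\<lambda>q. 0) \<longleftrightarrow> x \<in> ibf_rel scale m"
  by (simp add: ibf_equiv_def)

lemma ibf_equiv_refl: "ibf_equiv scale m x x"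
  using ibf_rel.zero by (simp add: ibf_equiv_def)

lemma ibf_equiv_sym: "ibf_equiv scale m x y \<Longrightarrow> ibf_equiv scale m y x"
  unfolding ibf_equiv_def using ibf_rel.smult[of "\<lambda>q. x q - y q" scale m "-1"] by simp

lemma ibf_equiv_trans:
  "ibf_equiv scale m x y \<Longrightarrow> ibf_equiv scale m y z \<Longrightarrow> ibf_equiv scale m x z"
  unfolding ibf_equiv_def using ibf_rel.add[of "\<lambda>q. x q - y q" scale m "\<lambda>q. y q - z q"] by simp

lemma ibf_equiv_add:
  "ibf_equiv scale m x x' \<Longrightarrow> ibf_equiv scale m y y' \<Longrightarrow>
   ibf_equiv scale m (\<lambda>q. x q + y q) (\<lambda>q. x' q + y' q)"
  unfolding ibf_equiv_def using ibf_rel.add[of "\<lambda>q. x q - x' q" scale m "\<lambda>q. y q - y' q"]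
  by (simp add: algebra_simps)

lemma ibf_equiv_smult:
  "ibf_equiv scale m x y \<Longrightarrow> ibf_equiv scale m (\<lambda>q. r * x q) (\<lambda>q. r * y q)"
  unfolding ibf_equiv_def using ibf_rel.smult[of "\<lambda>q. x q - y q" scale m r]
  by (simp add: algebra_simps)

lemma ibf_equiv_sum:
  assumes "finite S" and "\<And>p. p \<in> S \<Longrightarrow> ibf_equiv scale m (f p) (g p)"
  shows "ibf_equiv scale m (\<lambda>q. \<Sum>p\<in>S. f p q) (\<lambda>q. \<Sum>p\<in>S. g p q)"
  using assms by (induction S rule: finite_induct) (simp_all add: ibf_equiv_refl ibf_equiv_add)

declare ibf_equiv_trans [trans]

lemma ibf_equiv_delta_add_left:
  "ibf_equiv scale m (delta (a + a', b)) (\<lambda>q. delta (a, b) q + delta (a', b) q)"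
  unfolding ibf_equiv_def using ibf_rel.addl[of a a' b scale m] by (simp add: algebra_simps)

lemma ibf_equiv_delta_scale_left:
  "ibf_equiv scale m (delta (scale r a, b)) (\<lambda>q. r * delta (a, b) q)"
  unfolding ibf_equiv_def by (rule ibf_rel.scl)

lemma ibf_equiv_delta_assoc: "ibf_equiv scale m (delta (m a b, c)) (delta (a, m b c))"
  unfolding ibf_equiv_def by (rule ibf_rel.inv1)

lemma ibf_equiv_delta_cyclic: "ibf_equiv scale m (delta (m a b, c)) (delta (b, m c a))"
  unfolding ibf_equiv_def by (rule ibf_rel.inv2)

lemma finsupp_eq_sum_delta:
  assumes "finsupp x"
  shows "x = (\<lambda>q. \<Sum>p\<in>{p. x p \<noteq> 0}. x p * delta p q)"
proof
  fix q
  have "(\<Sum>p\<in>{p. x p \<noteq> 0}. x p * delta p q) = (\<Sum>p\<in>{p. x p \<noteq> 0}. if p = q then x q else 0)"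
    by (rule sum.cong) (auto simp: delta_def)
  also have "\<dots> = x q"
    using assms by (simp add: finsupp_def)
  finally show "x q = (\<Sum>p\<in>{p. x p \<noteq> 0}. x p * delta p q)" by simp
qed

lemma lin_ext_smult_delta: "lin_ext \<beta> (\<lambda>q. r * delta p q) = r * \<beta> (fst p) (snd p)"
proof (cases "r = 0")
  case False
  then have "{q. r * delta p q \<noteq> 0} = {p}" by (auto simp: delta_def)
  then show ?thesis by (simp add: lin_ext_def delta_def)
qed (simp add: lin_ext_def)

lemma finsupp_smult_delta: "finsupp (\<lambda>q. r * delta p q)"
proof -
  have "{q. r * delta p q \<noteq> 0} \<subseteq> {p}" by (auto simp: delta_def)
  then show ?thesis unfolding finsupp_def by (rule finite_subset) simp
qed

locale unital_alg =
  fixes scale :: "'r::comm_ring_1 \<Rightarrow> 'b::ab_group_add \<Rightarrow> 'b"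
    and m :: "'b \<Rightarrow> 'b \<Rightarrow> 'b" and e :: 'b
  assumes unital_algebra: "unital_algebra scale m e"
begin

sublocale module scale
  using unital_algebra unfolding unital_algebra_def by blast

lemma mult_add_left: "m (a + b) c = m a c + m b c"
  and mult_add_right: "m a (b + c) = m a b + m a c"
  and mult_scale_left: "m (scale r a) b = scale r (m a b)"
  and mult_scale_right: "m a (scale r b) = scale r (m a b)"
  and mult_unit_left: "m e a = a"
  and mult_unit_right: "m a e = a"
  using unital_algebra unfolding unital_algebra_def by blast+

lemma acspan_diff: "x \<in> acspan m \<Longrightarrow> y \<in> acspan m \<Longrightarrow> x - y \<in> acspan m"
  using acspan.add[OF _ acspan.neg[of y m], of x] by simp

lemma acspan_scale: "x \<in> acspan m \<Longrightarrow> scale r x \<in> acspan m"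
proof (induction rule: acspan.induct)
  case (assoc a b c)
  have "scale r (m (m a b) c - m a (m b c)) = m (m (scale r a) b) c - m (scale r a) (m b c)"
    by (simp add: mult_scale_left scale_right_diff_distrib)
  then show ?case by (metis acspan.assoc)
next
  case (comm a b)
  have "scale r (m a b - m b a) = m (scale r a) b - m b (scale r a)"
    by (simp add: mult_scale_left mult_scale_right scale_right_diff_distrib)
  then show ?case by (metis acspan.comm)
qed (auto intro: acspan.intros simp: scale_right_distrib)

abbreviation ibf_eq (infix "\<approx>" 50) where "x \<approx> y \<equiv> ibf_equiv scale m x y"

lemma delta_equiv_mult_unit: "delta (a, b) \<approx> delta (m a b, e)"
  using ibf_equiv_sym[OF ibf_equiv_delta_assoc[of scale m a b e]] by (simp add: mult_unit_right)

lemma delta_equiv_swap: "delta (a, b) \<approx> delta (b, a)"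
  using ibf_equiv_trans[OF delta_equiv_mult_unit ibf_equiv_delta_cyclic[of scale m a b e]]
  by (simp add: mult_unit_left)

lemma delta_equiv_diff_left: "delta (a - a', b) \<approx> (\<lambda>q. delta (a, b) q - delta (a', b) q)"
proof -
  have "delta (- a', b) \<approx> (\<lambda>q. - 1 * delta (a', b) q)"
    using ibf_equiv_delta_scale_left[of scale m "- 1" a' b] by simp
  then have "(\<lambda>q. delta (a, b) q + delta (- a', b) q) \<approx> (\<lambda>q. delta (a, b) q - delta (a', b) q)"
    using ibf_equiv_add[OF ibf_equiv_refl] by fastforce
  then show ?thesis
    using ibf_equiv_trans[OF ibf_equiv_delta_add_left[of scale m a "- a'" b]] by simp
qed

lemma delta_equiv_zero_of_equiv:
  assumes "delta (a, b) \<approx> delta (a', b)"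
  shows "delta (a - a', b) \<approx> (\<lambda>q. 0)"
proof -
  have "(\<lambda>q. delta (a, b) q - delta (a', b) q) \<approx> (\<lambda>q. 0)"
    using assms by (simp add: ibf_equiv_def)
  with delta_equiv_diff_left show ?thesis by (rule ibf_equiv_trans)
qed

lemma delta_acspan_equiv_zero: "c \<in> acspan m \<Longrightarrow> delta (c, e) \<approx> (\<lambda>q. 0)"
proof (induction rule: acspan.induct)
  case (assoc a b c)
  have "delta (m (m a b) c, e) \<approx> delta (m a (m b c), e)"
    using ibf_equiv_trans[OF ibf_equiv_sym[OF delta_equiv_mult_unit]
        ibf_equiv_trans[OF ibf_equiv_delta_assoc delta_equiv_mult_unit]] .
  then show ?case by (rule delta_equiv_zero_of_equiv)
next
  case (comm a b)
  have "delta (m a b, e) \<approx> delta (m b a, e)"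
    using ibf_equiv_trans[OF ibf_equiv_sym[OF delta_equiv_mult_unit]
        ibf_equiv_trans[OF delta_equiv_swap delta_equiv_mult_unit]] .
  then show ?case by (rule delta_equiv_zero_of_equiv)
next
  case zero
  show ?case using ibf_equiv_delta_scale_left[of scale m 0 0 e] by simp
next
  case (add x y)
  have "delta (x + y, e) \<approx> (\<lambda>q. delta (x, e) q + delta (y, e) q)"
    by (rule ibf_equiv_delta_add_left)
  also have "\<dots> \<approx> (\<lambda>q. 0 + 0)"
    by (rule ibf_equiv_add[OF add.IH])
  finally show ?case by simp
next
  case (neg x)
  have "delta (- x, e) \<approx> (\<lambda>q. - 1 * delta (x, e) q)"
    using ibf_equiv_delta_scale_left[of scale m "- 1" x e] by simp
  also have "\<dots> \<approx> (\<lambda>q. - 1 * 0)"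
    by (rule ibf_equiv_smult[OF neg.IH])
  finally show ?case by simp
qed

end

locale ac_split_algebra = unital_alg +
  fixes b0 :: 'b
  assumes spans: "\<forall>b. \<exists>r. \<exists>c\<in>acspan m. b = scale r b0 + c"
    and direct: "\<forall>r. scale r b0 \<in> acspan m \<longrightarrow> scale r b0 = 0"
    and free: "\<forall>r. scale r b0 = 0 \<longrightarrow> r = 0"
begin

abbreviation \<pi> where "\<pi> \<equiv> ac_coeff scale m b0"

lemma ac_decomp:
  obtains r c where "c \<in> acspan m" "b = scale r b0 + c"
  using spans by blast

lemma ac_coeff_eq:
  assumes "c \<in> acspan m"
  shows "\<pi> (scale r b0 + c) = r"
  unfolding ac_coeff_def
proof (rule the_equality)
  show "\<exists>c'\<in>acspan m. scale r b0 + c = scale r b0 + c'" using assms by blast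
next
  fix s
  assume "\<exists>c'\<in>acspan m. scale r b0 + c = scale s b0 + c'"
  then obtain c' where c': "c' \<in> acspan m" "scale r b0 + c = scale s b0 + c'" by blast
  then have "scale (s - r) b0 = c - c'"
    by (simp add: scale_left_diff_distrib algebra_simps)
  then have "scale (s - r) b0 = 0"
    using direct acspan_diff[OF assms c'(1)] by metis
  then show "s = r" using free by (metis eq_iff_diff_eq_0)
qed

lemma ac_coeff_add: "\<pi> (x + y) = \<pi> x + \<pi> y"
proof -
  obtain r c where x: "c \<in> acspan m" "x = scale r b0 + c" by (rule ac_decomp)
  obtain s d where y: "d \<in> acspan m" "y = scale s b0 + d" by (rule ac_decomp)
  have "x + y = scale (r + s) b0 + (c + d)" using x y by (simp add: scale_left_distrib)
  then show ?thesis using ac_coeff_eq x y acspan.add by metis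
qed

lemma ac_coeff_scale: "\<pi> (scale t x) = t * \<pi> x"
proof -
  obtain r c where x: "c \<in> acspan m" "x = scale r b0 + c" by (rule ac_decomp)
  have "scale t x = scale (t * r) b0 + scale t c" using x by (simp add: scale_right_distrib)
  then show ?thesis using ac_coeff_eq x acspan_scale by metis
qed

lemma ac_coeff_b0: "\<pi> b0 = 1"
  using ac_coeff_eq[of 0 1, OF acspan.zero] by simp

lemma ac_coeff_surj: "\<exists>b. \<pi> b = r"
  using ac_coeff_eq[OF acspan.zero, of r] by auto

lemma ac_coeff_eq_0_iff: "\<pi> b = 0 \<longleftrightarrow> b \<in> acspan m"
proof
  assume "\<pi> b = 0"
  obtain r c where c: "c \<in> acspan m" "b = scale r b0 + c" by (rule ac_decomp)
  with \<open>\<pi> b = 0\<close> have "r = 0" using ac_coeff_eq by simp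
  then show "b \<in> acspan m" using c by simp
qed (use ac_coeff_eq[of b 0] in simp)

lemma ac_coeff_cong: "a - b \<in> acspan m \<Longrightarrow> \<pi> a = \<pi> b"
  using ac_coeff_add[of b "a - b"] ac_coeff_eq_0_iff by simp

lemma ibf_ac_coeff_mult: "ibf scale m (\<lambda>a b. \<pi> (m a b))"
proof -
  have "\<pi> (m (m a b) c) = \<pi> (m a (m b c))" for a b c
    by (rule ac_coeff_cong) (rule acspan.assoc)
  moreover have "\<pi> (m a b) = \<pi> (m b a)" for a b
    by (rule ac_coeff_cong) (rule acspan.comm)
  ultimately show ?thesis
    unfolding ibf_def bilinear_form_def
    by (simp add: mult_add_left mult_add_right mult_scale_left mult_scale_right
        ac_coeff_add ac_coeff_scale) metis
qed

lemma delta_equiv_ac_coeff: "delta (a, b) \<approx> (\<lambda>q. \<pi> (m a b) * delta (b0, e) q)"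
proof -
  obtain r c where c: "c \<in> acspan m" "m a b = scale r b0 + c" by (rule ac_decomp)
  have "delta (m a b, e) \<approx> (\<lambda>q. delta (scale r b0, e) q + delta (c, e) q)"
    unfolding c(2) by (rule ibf_equiv_delta_add_left)
  also have "(\<lambda>q. delta (scale r b0, e) q + delta (c, e) q) \<approx> (\<lambda>q. r * delta (b0, e) q + 0)"
    by (rule ibf_equiv_add[OF ibf_equiv_delta_scale_left delta_acspan_equiv_zero[OF c(1)]])
  finally have "delta (m a b, e) \<approx> (\<lambda>q. r * delta (b0, e) q)"
    by simp
  moreover have "\<pi> (m a b) = r" using c ac_coeff_eq by simp
  ultimately show ?thesis using ibf_equiv_trans[OF delta_equiv_mult_unit] by simp
qed

lemma lin_ext_ac_coeff_mult_kernel: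
  assumes "finsupp x" and "lin_ext (\<lambda>a b. \<pi> (m a b)) x = 0"
  shows "x \<in> ibf_rel scale m"
proof -
  let ?S = "{p. x p \<noteq> 0}"
  have "(\<lambda>q. \<Sum>p\<in>?S. x p * delta p q)
      \<approx> (\<lambda>q. \<Sum>p\<in>?S. x p * (\<pi> (m (fst p) (snd p)) * delta (b0, e) q))"
    using \<open>finsupp x\<close> unfolding finsupp_def
    by (rule ibf_equiv_sum) (metis ibf_equiv_smult delta_equiv_ac_coeff prod.collapse)
  also have "(\<lambda>q. \<Sum>p\<in>?S. x p * (\<pi> (m (fst p) (snd p)) * delta (b0, e) q))
      = (\<lambda>q. lin_ext (\<lambda>a b. \<pi> (m a b)) x * delta (b0, e) q)"
    by (simp add: lin_ext_def sum_distrib_right mult.assoc)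
  finally show ?thesis
    using assms finsupp_eq_sum_delta ibf_equiv_zero_iff by fastforce
qed

lemma ibf_principle_ac_coeff_mult: "ibf_principle scale m (\<lambda>a b. \<pi> (m a b))"
  unfolding ibf_principle_def
proof (intro conjI allI impI)
  fix r
  show "\<exists>x. finsupp x \<and> lin_ext (\<lambda>a b. \<pi> (m a b)) x = r"
    using finsupp_smult_delta lin_ext_smult_delta[of "\<lambda>a b. \<pi> (m a b)" r "(b0, e)"]
    by (fastforce simp: mult_unit_right ac_coeff_b0)
qed (use ibf_ac_coeff_mult lin_ext_ac_coeff_mult_kernel in auto)

end

theorem corollary6p9:
  fixes scale :: "'r::comm_ring_1 \<Rightarrow> 'b::ab_group_add \<Rightarrow> 'b"
    and m :: "'b \<Rightarrow> 'b \<Rightarrow> 'b" and e :: 'b and b0 :: 'b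
  assumes alg: "unital_algebra scale m e"
    and spans: "\<forall>b. \<exists>r. \<exists>c\<in>acspan m. b = scale r b0 + c"
    and direct: "\<forall>r. scale r b0 \<in> acspan m \<longrightarrow> scale r b0 = 0"
    and free: "\<forall>r. scale r b0 = 0 \<longrightarrow> r = 0"
  shows "ibf scale m (\<lambda>a b. ac_coeff scale m b0 (m a b))
    \<and> ibf_principle scale m (\<lambda>a b. ac_coeff scale m b0 (m a b))
    \<and> (\<forall>a b. a - b \<in> acspan m \<longrightarrow>
          ac_coeff scale m b0 (m a e) = ac_coeff scale m b0 (m b e))
    \<and> (\<forall>r a b. ac_coeff scale m b0 (m (scale r a + b) e)
          = r * ac_coeff scale m b0 (m a e) + ac_coeff scale m b0 (m b e))
    \<and> (\<forall>r. \<exists>b. ac_coeff scale m b0 (m b e) = r)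
    \<and> (\<forall>b. ac_coeff scale m b0 (m b e) = 0 \<longrightarrow> b \<in> acspan m)"
proof -
  interpret ac_split_algebra scale m e b0
    using assms by unfold_locales
  show ?thesis
    using ibf_ac_coeff_mult ibf_principle_ac_coeff_mult ac_coeff_cong ac_coeff_surj
      ac_coeff_eq_0_iff
    by (simp add: mult_unit_right ac_coeff_add ac_coeff_scale)
qed

end
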